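(* Let $a_1,a_2$ be nonzero integers, $\Delta:=a_1^2+4a_2$ assumed not a perfect square, $\Delta_0$ the squarefree part of $\Delta$, and $K:=\mathbb{Q}(\sqrt{\Delta})$. Let $n$ be an odd positive integer with $3\nmid n$ whenever $\Delta_0=-3$, let $d$ be a positive integer dividing $n$, and let $\zeta_n=e^{2\pi i/n}$. Then for $a\in K$: $a\in K(\zeta_n)^d$ if and only if $a\in K^d$.
   Context: For a field $F$, $F^d$ denotes the set of $d$th powers of elements of $F$. *)

theory Defs
  imports "HOL-Analysis.Analysis" "HOL-Computational_Algebra.Squarefree"
begin

definition complex_subfield :: "complex set \<Rightarrow> bool" where
  "complex_subfield S \<longleftrightarrow> 0 \<in> S \<and> 1 \<in> S \<and>
     (\<forall>x\<in>S. \<forall>y\<in>S. x + y \<in> S \<and> x - y \<in> S \<and> x * y \<in> S) \<and>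
     (\<forall>x\<in>S. x \<noteq> 0 \<longrightarrow> inverse x \<in> S)"

definition gen_field :: "complex set \<Rightarrow> complex set" where
  "gen_field X = \<Inter> {S. complex_subfield S \<and> X \<subseteq> S}"

definition dth_powers :: "complex set \<Rightarrow> nat \<Rightarrow> complex set" where
  "dth_powers F d = {b ^ d | b. b \<in> F}"

definition squarefree_part :: "int \<Rightarrow> int" where
  "squarefree_part D = (THE s. squarefree s \<and> (\<exists>m. D = s * m^2))"

end

(*
  Let L = K(zeta_n) for a subfield K of the complex numbers. The K-embeddings of L send zeta_n
  to powers of zeta_n, so they commute with each other, and K is exactly the set of elements of L
  fixed by all of them. Kummer's argument then descends radicals: if p | n is a prime with
  zeta_p not in K and b in L has b^p in K, then some twist zeta_p^k * b is fixed by an embedding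
  moving zeta_p, hence by all embeddings, so it lies in K. Splitting off one prime factor of d
  at a time shows that an element of K which is a d-th power in L is a d-th power in K.

  For K = Q(sqrt Delta) the hypothesis zeta_p not in K holds for every prime p | n: otherwise
  zeta_p + conj zeta_p is rational, hence an integer (a Lucas-sequence argument), of absolute
  value at most 2, which forces zeta_p^12 = 1, so p = 3 and Delta = -3 v^2, i.e. Delta_0 = -3.
*)

theory Submission
  imports Defs "HOL-Number_Theory.Cong"
begin

section \<open>Subfields of the complex numbers and polynomials over them\<close>

lemma complex_subfield_gen_field: "complex_subfield (gen_field X)"
  unfolding complex_subfield_def gen_field_def by auto

lemma gen_field_superset: "X \<subseteq> gen_field X"
  unfolding gen_field_def by auto

lemma gen_field_least: "complex_subfield S \<Longrightarrow> X \<subseteq> S \<Longrightarrow> gen_field X \<subseteq> S"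
  unfolding gen_field_def by auto

definition poly_over :: "complex set \<Rightarrow> complex poly \<Rightarrow> bool" where
  "poly_over S f \<longleftrightarrow> (\<forall>i. coeff f i \<in> S)"

lemma poly_over_coeff: "poly_over S f \<Longrightarrow> coeff f i \<in> S"
  unfolding poly_over_def by simp

lemma poly_over_pCons_iff: "poly_over S (pCons c f) \<longleftrightarrow> c \<in> S \<and> poly_over S f"
  unfolding poly_over_def by (auto simp: coeff_pCons split: nat.split)

context
  fixes S :: "complex set"
  assumes S: "complex_subfield S"
begin

lemma subfield_0: "0 \<in> S" and subfield_1: "1 \<in> S"
  using S unfolding complex_subfield_def by auto

lemma subfield_add: "x \<in> S \<Longrightarrow> y \<in> S \<Longrightarrow> x + y \<in> S"
  and subfield_diff: "x \<in> S \<Longrightarrow> y \<in> S \<Longrightarrow> x - y \<in> S"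
  and subfield_mult: "x \<in> S \<Longrightarrow> y \<in> S \<Longrightarrow> x * y \<in> S"
  using S unfolding complex_subfield_def by auto

lemma subfield_inverse: "x \<in> S \<Longrightarrow> inverse x \<in> S"
  using S subfield_0 unfolding complex_subfield_def by (cases "x = 0") auto

lemma subfield_divide: "x \<in> S \<Longrightarrow> y \<in> S \<Longrightarrow> x / y \<in> S"
  by (simp add: divide_inverse subfield_mult subfield_inverse)

lemma subfield_power: "x \<in> S \<Longrightarrow> x ^ k \<in> S"
  by (induction k) (auto intro: subfield_mult subfield_1)

lemma subfield_sum: "(\<And>i. i \<in> A \<Longrightarrow> f i \<in> S) \<Longrightarrow> sum f A \<in> S"
  by (induction A rule: infinite_finite_induct) (auto intro: subfield_add subfield_0)

lemma subfield_poly: "poly_over S f \<Longrightarrow> y \<in> S \<Longrightarrow> poly f y \<in> S"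
  by (induction f) (auto simp: poly_over_pCons_iff subfield_0 subfield_add subfield_mult)

lemma poly_over_const: "c \<in> S \<Longrightarrow> poly_over S [:c:]"
  by (simp add: poly_over_def coeff_pCons subfield_0 split: nat.split)

lemma poly_over_0: "poly_over S 0"
  using poly_over_const[OF subfield_0] by simp

lemma poly_over_1: "poly_over S 1"
  using poly_over_const[OF subfield_1] by (simp add: one_pCons)

lemma poly_over_monom: "c \<in> S \<Longrightarrow> poly_over S (monom c k)"
  unfolding poly_over_def by (simp add: subfield_0)

lemma poly_over_add: "poly_over S f \<Longrightarrow> poly_over S h \<Longrightarrow> poly_over S (f + h)"
  and poly_over_diff: "poly_over S f \<Longrightarrow> poly_over S h \<Longrightarrow> poly_over S (f - h)"
  and poly_over_smult: "c \<in> S \<Longrightarrow> poly_over S f \<Longrightarrow> poly_over S (smult c f)"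
  unfolding poly_over_def by (simp_all add: subfield_add subfield_diff subfield_mult)

lemma poly_over_mult: "poly_over S f \<Longrightarrow> poly_over S h \<Longrightarrow> poly_over S (f * h)"
  unfolding poly_over_def coeff_mult by (auto intro!: subfield_sum subfield_mult)

lemma poly_over_division:
  assumes "poly_over S f" and h: "poly_over S h" "h \<noteq> 0"
  shows "\<exists>q r. poly_over S q \<and> poly_over S r \<and> f = q * h + r \<and> (r = 0 \<or> degree r < degree h)"
  using assms(1)
proof (induction "degree f" arbitrary: f rule: less_induct)
  case (less f)
  show ?case
  proof (cases "f = 0 \<or> degree f < degree h")
    case True
    then show ?thesis using less.prems poly_over_0 by (intro exI[of _ 0] exI[of _ f]) auto
  next
    case False
    define m where "m = monom (lead_coeff f / lead_coeff h) (degree f - degree h)"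
    have m: "poly_over S m"
      unfolding m_def using less.prems h by (intro poly_over_monom subfield_divide poly_over_coeff)
    have "degree (m * h) = degree f"
      using False h(2) by (simp add: m_def degree_mult_eq degree_monom_eq)
    moreover have "lead_coeff (m * h) = lead_coeff f"
      using False h(2) unfolding lead_coeff_mult by (simp add: m_def degree_monom_eq)
    ultimately have "coeff (f - m * h) (degree f) = 0" "degree (f - m * h) \<le> degree f"
      by (simp_all add: degree_diff_le)
    then have smaller: "f - m * h = 0 \<or> degree (f - m * h) < degree f"
      by (metis le_neq_implies_less leading_coeff_0_iff)
    have "poly_over S (f - m * h)"
      using less.prems m h by (intro poly_over_diff poly_over_mult)
    then obtain q r where qr: "poly_over S q" "poly_over S r" "f - m * h = q * h + r"
        "r = 0 \<or> degree r < degree h"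
      using smaller less.hyps[of "f - m * h"] poly_over_0 by (metis add_0 mult_zero_left)
    then have "f = (q + m) * h + r" by (simp add: algebra_simps)
    with qr m show ?thesis using poly_over_add by blast
  qed
qed

text \<open>
  \<open>d\<close> is a nonzero combination of least degree; division with remainder shows that it divides
  all combinations.
\<close>
lemma poly_over_bezout:
  assumes f: "poly_over S f" "f \<noteq> 0" and g: "poly_over S g"
  obtains u v d where "poly_over S u" "poly_over S v" "d = u * f + v * g" "d \<noteq> 0"
    and "\<exists>q. poly_over S q \<and> f = q * d" "\<exists>q. poly_over S q \<and> g = q * d"
proof -
  define comb where
    "comb e \<longleftrightarrow> (\<exists>u v. poly_over S u \<and> poly_over S v \<and> e = u * f + v * g)" for e
  have comb_over: "poly_over S e" if "comb e" for e
    using that f(1) g unfolding comb_def by (metis poly_over_add poly_over_mult)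
  have comb_f: "comb f"
    unfolding comb_def using poly_over_0 poly_over_1
    by (intro exI[of _ "1 :: complex poly"] exI[of _ "0 :: complex poly"]) simp
  have comb_g: "comb g"
    unfolding comb_def using poly_over_0 poly_over_1
    by (intro exI[of _ "0 :: complex poly"] exI[of _ "1 :: complex poly"]) simp
  define d where "d = (ARG_MIN degree e. comb e \<and> e \<noteq> 0)"
  have "(comb d \<and> d \<noteq> 0) \<and> (\<forall>e. comb e \<and> e \<noteq> 0 \<longrightarrow> degree d \<le> degree e)"
    unfolding d_def by (rule arg_min_nat_lemma) (use comb_f f(2) in blast)
  then have d: "comb d" "d \<noteq> 0" and d_least: "\<And>e. comb e \<Longrightarrow> e \<noteq> 0 \<Longrightarrow> degree d \<le> degree e"
    by blast+
  obtain u v where uv: "poly_over S u" "poly_over S v" "d = u * f + v * g"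
    using d(1) unfolding comb_def by blast
  have "\<exists>q. poly_over S q \<and> e = q * d" if e: "comb e" for e
  proof -
    obtain q r where qr: "poly_over S q" "e = q * d + r" "r = 0 \<or> degree r < degree d"
      using poly_over_division[OF comb_over[OF e] comb_over[OF d(1)] d(2)] by blast
    obtain u' v' where u'v': "poly_over S u'" "poly_over S v'" "e = u' * f + v' * g"
      using e unfolding comb_def by blast
    have "r = (u' - q * u) * f + (v' - q * v) * g"
      using qr(2) u'v'(3) uv(3) by (simp add: algebra_simps)
    moreover have "poly_over S (u' - q * u)" "poly_over S (v' - q * v)"
      using uv u'v' qr(1) by (simp_all add: poly_over_diff poly_over_mult)
    ultimately have "comb r" unfolding comb_def by blast
    then have "r = 0" using qr(3) d_least by fastforce
    then show ?thesis using qr(1,2) by auto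
  qed
  then show thesis using that uv d(2) comb_f comb_g by blast
qed

end

section \<open>Roots of unity\<close>

definition zeta :: "nat \<Rightarrow> complex" where
  "zeta m = exp (2 * pi * \<i> / of_nat m)"

lemma zeta_power: "zeta m ^ k = exp (2 * of_real pi * \<i> * of_nat k / of_nat m)"
  unfolding zeta_def exp_of_nat_mult[symmetric] by (simp add: field_simps)

lemma zeta_nonzero: "zeta m \<noteq> 0"
  unfolding zeta_def by simp

lemma zeta_power_eq_iff: "m > 0 \<Longrightarrow> zeta m ^ j = zeta m ^ k \<longleftrightarrow> [j = k] (mod m)"
  unfolding zeta_power cong_def by (simp add: complex_root_unity_eq)

lemma zeta_power_eq_1_iff: "m > 0 \<Longrightarrow> zeta m ^ k = 1 \<longleftrightarrow> m dvd k"
  unfolding zeta_power by (simp add: complex_root_unity_eq_1)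

lemma zeta_power_self: "zeta m ^ m = 1"
  by (cases "m = 0") (simp_all add: zeta_power_eq_1_iff)

lemma root_of_unity_is_zeta_power: "m > 0 \<Longrightarrow> z ^ m = 1 \<Longrightarrow> \<exists>k. z = zeta m ^ k"
  using complex_roots_unity[of m] unfolding zeta_power by auto

lemma zeta_mult_power:
  assumes "e > 0"
  shows "zeta (p * e) ^ e = zeta p"
proof -
  have "zeta (p * e) ^ e = exp (2 * of_real pi * \<i> * of_nat e / of_nat (p * e))"
    by (rule zeta_power)
  also have "\<dots> = zeta p"
    using assms by (cases "p = 0") (simp_all add: zeta_def)
  finally show ?thesis .
qed

lemma power_eq_power_imp_zeta_multiple:
  fixes x y :: complex
  assumes "m > 0" "x ^ m = y ^ m" "y \<noteq> 0"
  shows "\<exists>k. x = zeta m ^ k * y"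
proof -
  have "(x / y) ^ m = 1" using assms by (simp add: power_divide)
  then obtain k where "x / y = zeta m ^ k" using root_of_unity_is_zeta_power assms(1) by blast
  then show ?thesis using assms(3) by (auto simp: field_simps)
qed

lemma power_eq_power_imp_zeta_twist:
  fixes b c :: complex
  assumes "e > 0" "p > 0" "c ^ p = (b ^ e) ^ p" "b \<noteq> 0"
  shows "\<exists>j. c = (zeta (p * e) ^ j * b) ^ e"
proof -
  obtain j where "c = zeta p ^ j * b ^ e"
    using power_eq_power_imp_zeta_multiple[OF assms(2,3)] assms(4) by auto
  also have "\<dots> = (zeta (p * e) ^ e) ^ j * b ^ e" using zeta_mult_power[OF assms(1)] by simp
  also have "\<dots> = (zeta (p * e) ^ j * b) ^ e"
    by (simp add: power_mult_distrib mult.commute flip: power_mult)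
  finally show ?thesis ..
qed

lemma Re_Im_zeta: "Re (zeta m) = cos (2 * pi / m)" "Im (zeta m) = sin (2 * pi / m)"
  unfolding zeta_def by (simp_all add: Re_exp Im_exp)

lemma norm_zeta: "norm (zeta m) = 1"
  unfolding zeta_def by simp

section \<open>Simple algebraic extensions and their embeddings\<close>

locale algebraic_extension =
  fixes K :: "complex set" and \<alpha> :: complex
  assumes subfield_K: "complex_subfield K"
    and algebraic: "\<exists>f. poly_over K f \<and> f \<noteq> 0 \<and> poly f \<alpha> = 0"
begin

definition min_poly :: "complex poly" where
  "min_poly = (ARG_MIN degree f. poly_over K f \<and> f \<noteq> 0 \<and> poly f \<alpha> = 0)"

lemma min_poly_least:
  "(poly_over K min_poly \<and> min_poly \<noteq> 0 \<and> poly min_poly \<alpha> = 0) \<and>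
   (\<forall>f. poly_over K f \<and> f \<noteq> 0 \<and> poly f \<alpha> = 0 \<longrightarrow> degree min_poly \<le> degree f)"
proof -
  from algebraic obtain f where "poly_over K f \<and> f \<noteq> 0 \<and> poly f \<alpha> = 0" ..
  then show ?thesis unfolding min_poly_def by (rule arg_min_nat_lemma)
qed

lemma min_poly: "poly_over K min_poly" "min_poly \<noteq> 0" "poly min_poly \<alpha> = 0"
  and degree_min_poly_le: "poly_over K f \<Longrightarrow> f \<noteq> 0 \<Longrightarrow> poly f \<alpha> = 0 \<Longrightarrow> degree min_poly \<le> degree f"
  using min_poly_least by blast+

lemma min_poly_dvd:
  assumes "poly_over K f" "poly f \<alpha> = 0"
  shows "min_poly dvd f"
proof -
  obtain q r where qr: "poly_over K r" "f = q * min_poly + r" "r = 0 \<or> degree r < degree min_poly"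
    using poly_over_division[OF subfield_K assms(1) min_poly(1,2)] by blast
  have "poly r \<alpha> = 0" using qr(2) assms(2) min_poly(3) by (simp add: algebra_simps)
  then have "r = 0" using qr degree_min_poly_le by force
  then show ?thesis using qr(2) by simp
qed

lemma degree_min_poly_pos: "degree min_poly > 0"
proof (rule ccontr)
  assume "\<not> degree min_poly > 0"
  then obtain c where "min_poly = [:c:]" by (metis degree_eq_zeroE gr0I)
  then show False using min_poly(2,3) by simp
qed

definition conjugates :: "complex set" where
  "conjugates = {z. poly min_poly z = 0}"

definition ext_field :: "complex set" where
  "ext_field = {poly f \<alpha> | f. poly_over K f}"

lemma ext_field_poly: "poly_over K f \<Longrightarrow> poly f \<alpha> \<in> ext_field"
  unfolding ext_field_def by auto

lemma ext_fieldE: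
  assumes "x \<in> ext_field"
  obtains f where "poly_over K f" "x = poly f \<alpha>"
  using assms unfolding ext_field_def by auto

lemma subset_ext_field: "K \<subseteq> ext_field"
  using ext_field_poly[OF poly_over_const[OF subfield_K]] by fastforce

lemma alpha_in_ext_field: "\<alpha> \<in> ext_field"
  using ext_field_poly[of "[:0, 1:]"] subfield_0[OF subfield_K] subfield_1[OF subfield_K]
  by (simp add: poly_over_pCons_iff poly_over_0[OF subfield_K])

lemma
  assumes "x \<in> ext_field" "y \<in> ext_field"
  shows ext_field_add: "x + y \<in> ext_field"
    and ext_field_diff: "x - y \<in> ext_field"
    and ext_field_mult: "x * y \<in> ext_field"
proof -
  obtain f h where "poly_over K f" "poly_over K h" "x = poly f \<alpha>" "y = poly h \<alpha>"
    using assms by (meson ext_fieldE)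
  then show "x + y \<in> ext_field" "x - y \<in> ext_field" "x * y \<in> ext_field"
    using ext_field_poly[of "f + h"] ext_field_poly[of "f - h"] ext_field_poly[of "f * h"]
      poly_over_add[OF subfield_K] poly_over_diff[OF subfield_K] poly_over_mult[OF subfield_K]
    by simp_all
qed

lemma ext_field_inverse:
  assumes "x \<in> ext_field" "x \<noteq> 0"
  shows "inverse x \<in> ext_field"
proof -
  obtain f where f: "poly_over K f" "x = poly f \<alpha>" using assms(1) by (rule ext_fieldE)
  have "f \<noteq> 0" using f assms(2) by auto
  obtain u v d where uv: "poly_over K u" "poly_over K v" "d = u * f + v * min_poly" "d \<noteq> 0"
    and d_dvd: "\<exists>q. poly_over K q \<and> f = q * d" "\<exists>q. poly_over K q \<and> min_poly = q * d"
    using poly_over_bezout[OF subfield_K f(1) \<open>f \<noteq> 0\<close> min_poly(1)] by blast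
  obtain q where q: "poly_over K q" "min_poly = q * d" using d_dvd(2) by blast
  have "poly d \<alpha> \<noteq> 0" using d_dvd(1) f assms(2) by auto
  then have "poly q \<alpha> = 0" "q \<noteq> 0" using q(2) min_poly(2,3) by auto
  then have "degree min_poly \<le> degree q" using degree_min_poly_le q(1) by blast
  then have "degree d = 0" using q(2) uv(4) \<open>q \<noteq> 0\<close> by (simp add: degree_mult_eq)
  then obtain c where c: "d = [:c:]" by (rule degree_eq_zeroE)
  have "poly_over K d" unfolding uv(3) using uv(1,2) f(1) min_poly(1) subfield_K
    by (intro poly_over_add poly_over_mult)
  then have "c \<in> K" "c \<noteq> 0" using poly_over_coeff[of K d 0] uv(4) c by auto
  have "c = poly d \<alpha>" using c by simp
  also have "\<dots> = poly u \<alpha> * x" using uv(3) f(2) min_poly(3) by simp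
  finally have "inverse x = poly (smult (inverse c) u) \<alpha>"
    using \<open>c \<noteq> 0\<close> assms(2) by (simp add: field_simps)
  then show ?thesis
    using ext_field_poly[OF poly_over_smult[OF subfield_K _ uv(1)]]
      subfield_inverse[OF subfield_K \<open>c \<in> K\<close>] by simp
qed

lemma complex_subfield_ext_field: "complex_subfield ext_field"
  unfolding complex_subfield_def
  using ext_field_add ext_field_diff ext_field_mult ext_field_inverse subset_ext_field
    subfield_0[OF subfield_K] subfield_1[OF subfield_K] by auto

lemma ext_field_least:
  assumes "complex_subfield S" "K \<subseteq> S" "\<alpha> \<in> S"
  shows "ext_field \<subseteq> S"
proof
  fix x assume "x \<in> ext_field"
  then obtain f where "poly_over K f" "x = poly f \<alpha>" by (rule ext_fieldE)
  then show "x \<in> S"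
    using assms subfield_poly[OF assms(1), of f \<alpha>] by (auto simp: poly_over_def)
qed

lemma gen_field_insert_eq_ext_field:
  assumes "K = gen_field X"
  shows "gen_field (insert \<alpha> X) = ext_field"
proof
  show "gen_field (insert \<alpha> X) \<subseteq> ext_field"
    using assms gen_field_superset[of X] subset_ext_field alpha_in_ext_field
    by (intro gen_field_least complex_subfield_ext_field) auto
  show "ext_field \<subseteq> gen_field (insert \<alpha> X)"
  proof (rule ext_field_least[OF complex_subfield_gen_field])
    show "K \<subseteq> gen_field (insert \<alpha> X)"
      unfolding assms using gen_field_superset[of "insert \<alpha> X"]
      by (intro gen_field_least[OF complex_subfield_gen_field]) blast
  qed (use gen_field_superset in blast)
qed

text \<open>
  For a conjugate \<open>z\<close>, \<open>embed z\<close> is the \<open>K\<close>-embedding of \<open>K(\<alpha>)\<close> sending \<open>\<alpha>\<close> to \<open>z\<close>: it is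
  well defined because the minimal polynomial divides every \<open>K\<close>-polynomial vanishing at \<open>\<alpha>\<close>.
\<close>
definition embed :: "complex \<Rightarrow> complex \<Rightarrow> complex" where
  "embed z x = poly (SOME f. poly_over K f \<and> x = poly f \<alpha>) z"

lemma embed_poly:
  assumes "poly_over K f" "z \<in> conjugates"
  shows "embed z (poly f \<alpha>) = poly f z"
proof -
  define h where "h = (SOME h. poly_over K h \<and> poly f \<alpha> = poly h \<alpha>)"
  have h: "poly_over K h" "poly f \<alpha> = poly h \<alpha>"
    unfolding h_def using someI_ex[of "\<lambda>h. poly_over K h \<and> poly f \<alpha> = poly h \<alpha>"] assms(1)
    by blast+
  have "min_poly dvd f - h"
    using poly_over_diff[OF subfield_K assms(1) h(1)] h(2) by (intro min_poly_dvd) simp_all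
  then obtain k where "f - h = min_poly * k" by (elim dvdE)
  then have "poly (f - h) z = 0"
    using assms(2) by (simp add: conjugates_def)
  then show ?thesis unfolding embed_def h_def[symmetric] by simp
qed

lemma embed_fixes: "c \<in> K \<Longrightarrow> z \<in> conjugates \<Longrightarrow> embed z c = c"
  using embed_poly[OF poly_over_const[OF subfield_K]] by fastforce

lemma embed_alpha: "z \<in> conjugates \<Longrightarrow> embed z \<alpha> = z"
  using embed_poly[of "[:0, 1:]"] subfield_0[OF subfield_K] subfield_1[OF subfield_K]
  by (simp add: poly_over_pCons_iff poly_over_0[OF subfield_K])

lemma
  assumes "x \<in> ext_field" "y \<in> ext_field" "z \<in> conjugates"
  shows embed_add: "embed z (x + y) = embed z x + embed z y"
    and embed_mult: "embed z (x * y) = embed z x * embed z y"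
proof -
  obtain f h where "poly_over K f" "poly_over K h" "x = poly f \<alpha>" "y = poly h \<alpha>"
    using assms(1,2) by (meson ext_fieldE)
  then show "embed z (x + y) = embed z x + embed z y" "embed z (x * y) = embed z x * embed z y"
    using embed_poly[OF _ assms(3)] embed_poly[OF poly_over_add[OF subfield_K] assms(3), of f h]
      embed_poly[OF poly_over_mult[OF subfield_K] assms(3), of f h]
    by simp_all
qed

lemma embed_power:
  assumes "x \<in> ext_field" "z \<in> conjugates"
  shows "embed z (x ^ k) = embed z x ^ k"
proof (induction k)
  case 0
  show ?case using embed_fixes[OF subfield_1[OF subfield_K] assms(2)] by simp
next
  case (Suc k)
  then show ?case
    using embed_mult[OF assms(1) subfield_power[OF complex_subfield_ext_field assms(1)] assms(2)]
    by simp
qed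

text \<open>
  If the minimal polynomial has \<open>deg g\<close> distinct roots, an element \<open>r(\<alpha>)\<close> with \<open>deg r < deg g\<close>
  fixed by all embeddings makes \<open>r - r(\<alpha>)\<close> vanish at all of them, so \<open>r\<close> is constant.
\<close>
lemma fixed_by_embeddings_imp_in_K:
  assumes "card conjugates = degree min_poly" "x \<in> ext_field"
    and "\<And>z. z \<in> conjugates \<Longrightarrow> embed z x = x"
  shows "x \<in> K"
proof -
  obtain f where f: "poly_over K f" "x = poly f \<alpha>" using assms(2) by (rule ext_fieldE)
  obtain q r where qr: "poly_over K r" "f = q * min_poly + r" "r = 0 \<or> degree r < degree min_poly"
    using poly_over_division[OF subfield_K f(1) min_poly(1,2)] by blast
  have x: "x = poly r \<alpha>" using f qr(2) min_poly(3) by simp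
  have "r = [:x:]"
  proof (cases "r = 0")
    case False
    show ?thesis
    proof (rule poly_eqI_degree[of conjugates])
      fix z assume "z \<in> conjugates"
      then show "poly r z = poly [:x:] z" using assms(3)[of z] embed_poly[OF qr(1)] x by simp
    qed (use assms(1) qr(3) False degree_min_poly_pos in auto)
  qed (use x in simp)
  then show ?thesis using poly_over_coeff[OF qr(1), of 0] by simp
qed

end

section \<open>Cyclotomic extensions and Kummer descent\<close>

lemma prime_dvd_if_cong_mult_self:
  fixes p r j :: nat
  assumes "prime p" "\<not> [r = 1] (mod p)" "[r * j = j] (mod p)"
  shows "p dvd j"
proof -
  have "int p dvd int j * (int r - 1)"
    using assms(3) unfolding cong_int_iff[symmetric] cong_iff_dvd_diff
    by (simp add: algebra_simps)
  moreover have "\<not> int p dvd int r - 1"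
    using assms(2) unfolding cong_int_iff[symmetric] cong_iff_dvd_diff by simp
  ultimately show ?thesis
    using assms(1) by (simp add: prime_dvd_mult_iff)
qed

lemma exists_cong_affine_fixed_point:
  fixes p r e :: nat
  assumes "prime p" "\<not> [r = 1] (mod p)"
  shows "\<exists>k. [k * r + e = k] (mod p)"
proof -
  have "\<not> int p dvd int r - 1"
    using assms(2) unfolding cong_int_iff[symmetric] cong_iff_dvd_diff by simp
  then have "coprime (int r - 1) (int p)"
    using assms(1) by (simp add: prime_imp_coprime coprime_commute)
  then obtain x where x: "[(int r - 1) * x = 1] (mod int p)"
    using cong_solve_coprime_int by blast
  define k where "k = nat ((- int e * x) mod int p)"
  have "[int k = - int e * x] (mod int p)"
    unfolding k_def cong_def using assms(1) by (simp add: prime_gt_0_nat)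
  then have "[int k * (int r - 1) + int e = - int e * ((int r - 1) * x) + int e] (mod int p)"
    by (metis cong_add cong_mult cong_refl mult.assoc mult.commute)
  also have "[- int e * ((int r - 1) * x) + int e = - int e * 1 + int e] (mod int p)"
    using x by (intro cong_add cong_mult cong_refl)
  finally have "[int k * int r + int e = int k] (mod int p)"
    unfolding cong_iff_dvd_diff by (simp add: algebra_simps)
  then have "[k * r + e = k] (mod p)"
    unfolding cong_int_iff[symmetric] by simp
  then show ?thesis ..
qed

locale cyclotomic_extension =
  fixes K :: "complex set" and n :: nat
  assumes K_subfield: "complex_subfield K" and n_pos: "n > 0"
begin

definition unity_poly :: "complex poly" where
  "unity_poly = monom 1 n - 1"

lemma poly_unity_poly: "poly unity_poly z = z ^ n - 1"
  unfolding unity_poly_def by (simp add: poly_monom)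

lemma degree_unity_poly: "degree unity_poly = n"
proof -
  have "degree (monom (1 :: complex) n + - 1) = n"
    using n_pos by (subst degree_add_eq_left) (simp_all add: degree_monom_eq)
  then show ?thesis unfolding unity_poly_def by simp
qed

lemma unity_poly_over: "poly_over K unity_poly"
  unfolding unity_poly_def
  using K_subfield by (intro poly_over_diff poly_over_monom poly_over_1 subfield_1)

lemma zeta_algebraic: "\<exists>f. poly_over K f \<and> f \<noteq> 0 \<and> poly f (zeta n) = 0"
  using unity_poly_over degree_unity_poly n_pos poly_unity_poly zeta_power_self
  by (intro exI[of _ unity_poly]) auto

end

sublocale cyclotomic_extension \<subseteq> algebraic_extension K "zeta n"
  using K_subfield zeta_algebraic by unfold_locales

context cyclotomic_extension
begin

lemma min_poly_dvd_unity_poly: "min_poly dvd unity_poly"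
  using min_poly_dvd[OF unity_poly_over] poly_unity_poly zeta_power_self by simp

lemma conjugate_power_n_eq_1:
  assumes "z \<in> conjugates"
  shows "z ^ n = 1"
proof -
  obtain q where "unity_poly = min_poly * q" using min_poly_dvd_unity_poly by (elim dvdE)
  then have "poly unity_poly z = 0" using assms by (simp add: conjugates_def)
  then show ?thesis by (simp add: poly_unity_poly)
qed

text \<open>\<open>X\<^sup>n - 1\<close> has \<open>n\<close> distinct roots, so each of its factors has as many roots as its degree.\<close>
lemma card_conjugates: "card conjugates = degree min_poly"
proof -
  obtain q where q: "unity_poly = min_poly * q"
    using min_poly_dvd_unity_poly by (elim dvdE)
  have "q \<noteq> 0" using q degree_unity_poly n_pos by auto
  have "{z. z ^ n = 1} \<subseteq> conjugates \<union> {z. poly q z = 0}"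
  proof
    fix z :: complex assume "z \<in> {z. z ^ n = 1}"
    then have "poly min_poly z * poly q z = 0" using q poly_unity_poly[of z] by (simp flip: poly_mult)
    then show "z \<in> conjugates \<union> {z. poly q z = 0}" unfolding conjugates_def by simp
  qed
  moreover have "finite (conjugates \<union> {z. poly q z = 0})"
    using poly_roots_finite[OF min_poly(2)] poly_roots_finite[OF \<open>q \<noteq> 0\<close>]
    unfolding conjugates_def by blast
  ultimately have "n \<le> card (conjugates \<union> {z. poly q z = 0})"
    using card_mono card_roots_unity_eq[OF n_pos] by metis
  also have "\<dots> \<le> card conjugates + card {z. poly q z = 0}"
    by (rule card_Un_le)
  also have "\<dots> \<le> card conjugates + degree q"
    using card_poly_roots_bound[OF \<open>q \<noteq> 0\<close>] by simp
  finally have "degree min_poly \<le> card conjugates"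
    using q degree_unity_poly degree_mult_eq[OF min_poly(2) \<open>q \<noteq> 0\<close>] by simp
  moreover have "card conjugates \<le> degree min_poly"
    unfolding conjugates_def using card_poly_roots_bound[OF min_poly(2)] .
  ultimately show ?thesis by simp
qed

lemma root_of_unity_in_ext_field: "z ^ n = 1 \<Longrightarrow> z \<in> ext_field"
  using root_of_unity_is_zeta_power[OF n_pos] alpha_in_ext_field
    subfield_power[OF complex_subfield_ext_field] by blast

lemma zeta_dvd_in_ext_field:
  assumes "m dvd n"
  shows "zeta m \<in> ext_field"
proof -
  obtain q where "n = m * q" using assms by (elim dvdE)
  then have "zeta m ^ n = 1" by (simp add: power_mult zeta_power_self)
  then show ?thesis by (rule root_of_unity_in_ext_field)
qed

lemma embed_poly_eval:
  assumes "poly_over K f" "y \<in> ext_field" "z \<in> conjugates"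
  shows "embed z (poly f y) = poly f (embed z y)"
  using assms(1)
proof (induction f)
  case (pCons c f)
  have "c \<in> K" "poly_over K f" using pCons.prems by (simp_all add: poly_over_pCons_iff)
  moreover have "poly f y \<in> ext_field"
    using \<open>poly_over K f\<close> subset_ext_field assms(2)
    by (intro subfield_poly[OF complex_subfield_ext_field]) (auto simp: poly_over_def)
  ultimately show ?case
    using pCons.IH assms(2,3) subset_ext_field
    by (auto simp: embed_add embed_mult embed_fixes ext_field_mult)
qed (use assms(3) embed_fixes subfield_0[OF K_subfield] in simp)

text \<open>Embeddings send \<open>\<zeta>\<^sub>n\<close> to powers of \<open>\<zeta>\<^sub>n\<close>, and powers commute.\<close>
lemma embed_commute:
  assumes "x \<in> ext_field" "z1 \<in> conjugates" "z2 \<in> conjugates"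
  shows "embed z1 (embed z2 x) = embed z2 (embed z1 x)"
proof -
  obtain f where f: "poly_over K f" "x = poly f (zeta n)" using assms(1) by (rule ext_fieldE)
  obtain k1 k2 where k: "z1 = zeta n ^ k1" "z2 = zeta n ^ k2"
    using root_of_unity_is_zeta_power[OF n_pos] conjugate_power_n_eq_1 assms(2,3) by metis
  have "embed z1 (embed z2 x) = poly f (embed z1 z2)"
    using f assms embed_poly embed_poly_eval root_of_unity_in_ext_field conjugate_power_n_eq_1 by simp
  also have "embed z1 z2 = zeta n ^ (k1 * k2)"
    using k embed_power[OF alpha_in_ext_field assms(2)] embed_alpha[OF assms(2)]
    by (simp add: power_mult)
  also have "\<dots> = embed z2 z1"
    using k embed_power[OF alpha_in_ext_field assms(3)] embed_alpha[OF assms(3)]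
    by (simp add: mult.commute flip: power_mult)
  also have "poly f \<dots> = embed z2 (embed z1 x)"
    using f assms embed_poly embed_poly_eval root_of_unity_in_ext_field conjugate_power_n_eq_1 by simp
  finally show ?thesis .
qed

lemma embed_radical:
  assumes "c \<in> ext_field" "c ^ m \<in> K" "c \<noteq> 0" "m > 0" "z \<in> conjugates"
  shows "\<exists>j. embed z c = zeta m ^ j * c"
proof -
  have "embed z c ^ m = embed z (c ^ m)" using embed_power[OF assms(1,5)] by simp
  also have "\<dots> = c ^ m" using embed_fixes[OF assms(2,5)] .
  finally show ?thesis using power_eq_power_imp_zeta_multiple[OF assms(4) _ assms(3)] by blast
qed

lemma embed_moving_zeta:
  assumes "p dvd n" "p > 0" "zeta p \<notin> K"
  obtains \<sigma> r where "\<sigma> \<in> conjugates" "embed \<sigma> (zeta p) = zeta p ^ r" "\<not> [r = 1] (mod p)"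
proof -
  have \<zeta>: "zeta p \<in> ext_field" using zeta_dvd_in_ext_field[OF assms(1)] .
  obtain \<sigma> where \<sigma>: "\<sigma> \<in> conjugates" "embed \<sigma> (zeta p) \<noteq> zeta p"
    using fixed_by_embeddings_imp_in_K[OF card_conjugates \<zeta>] assms(3) by blast
  have "embed \<sigma> (zeta p) ^ p = embed \<sigma> (zeta p ^ p)" using embed_power[OF \<zeta> \<sigma>(1)] by simp
  also have "\<dots> = 1"
    using embed_fixes[OF subfield_1[OF K_subfield] \<sigma>(1)] by (simp add: zeta_power_self)
  finally obtain r where r: "embed \<sigma> (zeta p) = zeta p ^ r"
    using root_of_unity_is_zeta_power[OF assms(2)] by blast
  moreover have "\<not> [r = 1] (mod p)" using \<sigma>(2) r zeta_power_eq_iff[OF assms(2), of r 1] by auto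
  ultimately show thesis using that \<sigma>(1) by blast
qed

text \<open>
  Every embedding multiplies the radical \<open>c\<close> by some \<open>\<zeta>\<^sub>p\<^sup>j\<close>; commuting it with \<open>\<sigma>\<close>, which fixes \<open>c\<close>
  and raises \<open>\<zeta>\<^sub>p\<close> to the power \<open>r \<noteq> 1\<close>, gives \<open>\<zeta>\<^sub>p\<^sup>r\<^sup>j = \<zeta>\<^sub>p\<^sup>j\<close>, hence \<open>\<zeta>\<^sub>p\<^sup>j = 1\<close>.
\<close>
lemma radical_fixed_by_moving_embedding_in_K:
  assumes p: "prime p" "p dvd n"
    and \<sigma>: "\<sigma> \<in> conjugates" "embed \<sigma> (zeta p) = zeta p ^ r" "\<not> [r = 1] (mod p)"
    and c: "c \<in> ext_field" "c ^ p \<in> K" "c \<noteq> 0" "embed \<sigma> c = c"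
  shows "c \<in> K"
proof -
  have p0: "p > 0" using prime_gt_0_nat[OF p(1)] .
  have \<zeta>: "zeta p \<in> ext_field" using zeta_dvd_in_ext_field[OF p(2)] .
  have "embed z c = c" if z: "z \<in> conjugates" for z
  proof -
    obtain j where j: "embed z c = zeta p ^ j * c" using embed_radical[OF c(1-3) p0 z] by blast
    have "zeta p ^ j * c = embed \<sigma> (embed z c)" using embed_commute[OF c(1) \<sigma>(1) z] c(4) j by simp
    also have "\<dots> = embed \<sigma> (zeta p ^ j) * c"
      using embed_mult[OF subfield_power[OF complex_subfield_ext_field \<zeta>] c(1) \<sigma>(1)] c(4) j by simp
    also have "embed \<sigma> (zeta p ^ j) = zeta p ^ (r * j)"
      using embed_power[OF \<zeta> \<sigma>(1)] \<sigma>(2) by (simp add: power_mult)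
    finally have "[r * j = j] (mod p)" using c(3) zeta_power_eq_iff[OF p0] by (simp add: cong_sym_eq)
    then have "p dvd j" using prime_dvd_if_cong_mult_self[OF p(1) \<sigma>(3)] by blast
    then show ?thesis using j zeta_power_eq_1_iff[OF p0] by auto
  qed
  then show ?thesis using fixed_by_embeddings_imp_in_K[OF card_conjugates c(1)] by blast
qed

text \<open>Twisting \<open>b\<close> by a suitable power of \<open>\<zeta>\<^sub>p\<close> makes it fixed by an embedding that moves \<open>\<zeta>\<^sub>p\<close>.\<close>
lemma kummer_descent_prime:
  assumes p: "prime p" "p dvd n" "zeta p \<notin> K"
    and b: "b \<in> ext_field" "b \<noteq> 0" "b ^ p \<in> K"
  shows "\<exists>c\<in>K. c ^ p = b ^ p"
proof -
  have p0: "p > 0" using prime_gt_0_nat[OF p(1)] .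
  obtain \<sigma> r where \<sigma>: "\<sigma> \<in> conjugates" "embed \<sigma> (zeta p) = zeta p ^ r" "\<not> [r = 1] (mod p)"
    using embed_moving_zeta[OF p(2) p0 p(3)] .
  obtain e where e: "embed \<sigma> b = zeta p ^ e * b" using embed_radical[OF b(1,3,2) p0 \<sigma>(1)] by blast
  obtain k where k: "[k * r + e = k] (mod p)"
    using exists_cong_affine_fixed_point[OF p(1) \<sigma>(3)] by blast
  define c where "c = zeta p ^ k * b"
  have \<zeta>: "zeta p ^ k \<in> ext_field"
    using subfield_power[OF complex_subfield_ext_field zeta_dvd_in_ext_field[OF p(2)]] .
  have c: "c \<in> ext_field" "c \<noteq> 0" unfolding c_def using \<zeta> b(1,2) zeta_nonzero
    by (simp_all add: ext_field_mult)
  have "c ^ p = (zeta p ^ p) ^ k * b ^ p"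
    unfolding c_def by (simp add: power_mult_distrib mult.commute flip: power_mult)
  then have c_power: "c ^ p = b ^ p" by (simp add: zeta_power_self)
  have "embed \<sigma> c = embed \<sigma> (zeta p ^ k) * embed \<sigma> b"
    unfolding c_def using embed_mult[OF \<zeta> b(1) \<sigma>(1)] .
  also have "\<dots> = zeta p ^ (k * r + e) * b"
    using embed_power[OF zeta_dvd_in_ext_field[OF p(2)] \<sigma>(1)] \<sigma>(2) e
    by (simp add: power_add mult.commute flip: power_mult)
  also have "\<dots> = c" unfolding c_def using k zeta_power_eq_iff[OF p0] by metis
  finally have "embed \<sigma> c = c" .
  then have "c \<in> K"
    using radical_fixed_by_moving_embedding_in_K[OF p(1,2) \<sigma> c(1) _ c(2)] c_power b(3) by simp
  then show ?thesis using c_power by blast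
qed

lemma kummer_descent_radical:
  assumes no_zeta: "\<And>p. prime p \<Longrightarrow> p dvd n \<Longrightarrow> zeta p \<notin> K"
  shows "d dvd n \<Longrightarrow> b \<in> ext_field \<Longrightarrow> b ^ d \<in> K \<Longrightarrow> \<exists>c\<in>K. c ^ d = b ^ d"
proof (induction d arbitrary: b rule: less_induct)
  case (less d)
  show ?case
  proof (cases "d = 1 \<or> b = 0")
    case True
    then show ?thesis using less.prems(3) subfield_0[OF K_subfield] by auto
  next
    case False
    obtain p e where p: "prime p" "d = p * e" using False prime_factor_nat by (metis dvdE)
    have "e > 0" "e < d"
      using dvd_pos_nat[OF n_pos less.prems(1)] p(2) prime_gt_1_nat[OF p(1)] by auto
    have "p dvd n" "e dvd n" using less.prems(1) p(2) dvd_mult_left dvd_mult_right by blast+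
    have "b ^ e \<noteq> 0" "(b ^ e) ^ p \<in> K"
      using False less.prems(3) p(2) by (simp_all add: mult.commute flip: power_mult)
    then obtain c' where c': "c' \<in> K" "c' ^ p = (b ^ e) ^ p"
      using kummer_descent_prime[OF p(1) \<open>p dvd n\<close> no_zeta[OF p(1) \<open>p dvd n\<close>]
        subfield_power[OF complex_subfield_ext_field less.prems(2)]] by blast
    then obtain j where j: "c' = (zeta d ^ j * b) ^ e"
      using power_eq_power_imp_zeta_twist[OF \<open>e > 0\<close> prime_gt_0_nat[OF p(1)]] False p(2)
      by blast
    have "zeta d ^ j * b \<in> ext_field"
      using zeta_dvd_in_ext_field[OF less.prems(1)] less.prems(2)
      by (intro ext_field_mult subfield_power[OF complex_subfield_ext_field])
    then obtain c where "c \<in> K" "c ^ e = (zeta d ^ j * b) ^ e"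
      using less.IH[OF \<open>e < d\<close> \<open>e dvd n\<close>] c'(1) j by blast
    then show ?thesis using c' j p(2) by (metis mult.commute power_mult)
  qed
qed

lemma kummer_descent:
  assumes "\<And>p. prime p \<Longrightarrow> p dvd n \<Longrightarrow> zeta p \<notin> K" "d dvd n" "a \<in> K"
  shows "a \<in> dth_powers ext_field d \<longleftrightarrow> a \<in> dth_powers K d"
proof
  show "a \<in> dth_powers K d \<Longrightarrow> a \<in> dth_powers ext_field d"
    using subset_ext_field unfolding dth_powers_def by blast
  assume "a \<in> dth_powers ext_field d"
  then obtain b where b: "b \<in> ext_field" "a = b ^ d" unfolding dth_powers_def by blast
  then obtain c where "c \<in> K" "c ^ d = a"
    using kummer_descent_radical[OF assms(1,2) b(1)] assms(3) by auto
  then show "a \<in> dth_powers K d" unfolding dth_powers_def by blast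
qed

end

section \<open>Roots of unity in quadratic fields\<close>

fun lucas_V :: "int \<Rightarrow> int \<Rightarrow> nat \<Rightarrow> int" where
  "lucas_V P Q 0 = 2"
| "lucas_V P Q (Suc 0) = P"
| "lucas_V P Q (Suc (Suc k)) = P * lucas_V P Q (Suc k) - Q * lucas_V P Q k"

lemma lucas_V_eq_power_sum:
  fixes x y :: complex
  assumes "x + y = of_int P" "x * y = of_int Q"
  shows "of_int (lucas_V P Q k) = x ^ k + y ^ k"
proof (induction k rule: induct_nat_012)
  case (ge2 k)
  then show ?case by (simp add: assms(1,2)[symmetric] algebra_simps)
qed (use assms in simp_all)

lemma lucas_V_cong_power: "k > 0 \<Longrightarrow> [lucas_V P Q k = P ^ k] (mod Q)"
proof (induction k rule: induct_nat_012)
  case (ge2 k)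
  have "[P * lucas_V P Q (Suc k) - Q * lucas_V P Q k = P * P ^ Suc k - 0] (mod Q)"
    using ge2 by (intro cong_diff cong_mult cong_refl) (simp_all add: cong_mult_self_left)
  then show ?case by simp
qed simp_all

text \<open>
  If \<open>\<omega> + \<omega>\<^sup>- = r/s\<close> in lowest terms, then \<open>s\<omega>\<close> and \<open>s\<omega>\<^sup>-\<close> have sum \<open>r\<close> and product \<open>s\<^sup>2\<close>, so
  \<open>s\<^sup>m (\<omega>\<^sup>m + \<omega>\<^sup>-\<^sup>m) = 2s\<^sup>m\<close> is a Lucas number, congruent to \<open>r\<^sup>m\<close> modulo \<open>s\<^sup>2\<close>; hence \<open>s\<close> divides \<open>r\<^sup>m\<close>.
\<close>
lemma root_of_unity_trace_rat_imp_int: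
  fixes \<omega> :: complex
  assumes "\<omega> ^ m = 1" "m > 0" "\<omega> + cnj \<omega> = of_rat t"
  shows "t \<in> \<int>"
proof -
  obtain r s where rs: "quotient_of t = (r, s)" by (cases "quotient_of t")
  have t: "t = of_int r / of_int s" using quotient_of_div[OF rs] .
  have "s > 0" using quotient_of_denom_pos[OF rs] .
  have "coprime r s" using quotient_of_coprime[OF rs] .
  have "norm \<omega> = 1" using power_eq_1_iff[OF assms(1)] assms(2) by simp
  then have "\<omega> * cnj \<omega> = 1" by (simp add: complex_mult_cnj flip: cmod_power2)
  have "of_int s * \<omega> + of_int s * cnj \<omega> = of_int r"
    using assms(3) \<open>s > 0\<close> unfolding t by (simp add: of_rat_divide field_simps flip: distrib_left)
  moreover have "(of_int s * \<omega>) * (of_int s * cnj \<omega>) = of_int (s ^ 2)"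
    using \<open>\<omega> * cnj \<omega> = 1\<close> by (simp add: power2_eq_square algebra_simps)
  ultimately have "of_int (lucas_V r (s ^ 2) m) = (of_int s * \<omega>) ^ m + (of_int s * cnj \<omega>) ^ m"
    by (rule lucas_V_eq_power_sum)
  also have "\<dots> = of_int (2 * s ^ m)"
    using assms(1) by (simp add: power_mult_distrib flip: complex_cnj_power)
  finally have "lucas_V r (s ^ 2) m = 2 * s ^ m" by (simp only: of_int_eq_iff)
  then have "s ^ 2 dvd 2 * s ^ m - r ^ m"
    using lucas_V_cong_power[OF assms(2), of r "s ^ 2"] by (simp add: cong_iff_dvd_diff)
  then have "s dvd 2 * s ^ m - r ^ m" by (rule dvd_trans[rotated]) simp
  moreover have "s dvd 2 * s ^ m" using assms(2) by simp
  ultimately have "s dvd r ^ m" by (metis dvd_diff_right_iff)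
  moreover have "coprime (r ^ m) s" using \<open>coprime r s\<close> by simp
  ultimately have "is_unit s" using coprime_absorb_right[of s "r ^ m"] by blast
  then have "s = 1" using \<open>s > 0\<close> by simp
  then show ?thesis using t by simp
qed

lemma rat_square_eq_int_imp_square:
  fixes q :: rat
  assumes "q ^ 2 = of_int D"
  shows "\<exists>m. D = m ^ 2"
proof -
  obtain a b where ab: "quotient_of q = (a, b)" by (cases "quotient_of q")
  have "b > 0" "coprime a b" using quotient_of_denom_pos[OF ab] quotient_of_coprime[OF ab] by simp_all
  have "(of_int a / of_int b :: rat) ^ 2 = of_int D" using assms quotient_of_div[OF ab] by simp
  then have "a ^ 2 = D * b ^ 2"
    using \<open>b > 0\<close> by (simp add: field_simps flip: of_int_power of_int_mult of_int_eq_iff)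
  then have "b ^ 2 dvd a ^ 2" by simp
  moreover have "coprime (b ^ 2) (a ^ 2)" using \<open>coprime a b\<close> by (simp add: coprime_commute)
  ultimately have "is_unit (b ^ 2)" using coprime_absorb_left by blast
  then have "is_unit b" by (metis is_unit_power_iff zero_neq_numeral)
  then show ?thesis using \<open>a ^ 2 = D * b ^ 2\<close> \<open>b > 0\<close> by auto
qed

lemma rat_square_mult_int_eq_3:
  fixes q :: rat
  assumes "q ^ 2 * of_int N = 3"
  shows "\<exists>v. v \<noteq> 0 \<and> N = 3 * v ^ 2"
proof -
  obtain u v where uv: "quotient_of q = (u, v)" by (cases "quotient_of q")
  have "v > 0" "coprime u v" using quotient_of_denom_pos[OF uv] quotient_of_coprime[OF uv] by simp_all
  have "(of_int u / of_int v :: rat) ^ 2 * of_int N = 3" using assms quotient_of_div[OF uv] by simp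
  then have "u ^ 2 * N = 3 * v ^ 2"
    using \<open>v > 0\<close> by (simp add: field_simps flip: of_int_power of_int_mult of_int_eq_iff)
  then have "u ^ 2 dvd 3 * v ^ 2" by (metis dvd_triv_left)
  then have "u ^ 2 dvd 3"
    using \<open>coprime u v\<close> by (simp add: coprime_dvd_mult_left_iff)
  moreover have "squarefree (3 :: int)" by (simp add: squarefree_prime)
  ultimately have "is_unit u" by (metis squarefreeD)
  then have "u ^ 2 = 1" by (metis zdvd1_eq power2_abs power_one)
  then show ?thesis using \<open>u ^ 2 * N = 3 * v ^ 2\<close> \<open>v > 0\<close> by (intro exI[of _ v]) simp
qed

definition quadratic_field :: "int \<Rightarrow> complex set" where
  "quadratic_field D = {of_rat x + of_rat y * csqrt (of_int D) | x y. True}"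

lemma quadratic_field_memI: "of_rat x + of_rat y * csqrt (of_int D) \<in> quadratic_field D"
  unfolding quadratic_field_def by blast

lemma quadratic_field_memE:
  assumes "z \<in> quadratic_field D"
  obtains x y where "z = of_rat x + of_rat y * csqrt (of_int D)"
  using assms unfolding quadratic_field_def by blast

lemma quadratic_field_ring_closed:
  assumes "u \<in> quadratic_field D" "v \<in> quadratic_field D"
  shows "u + v \<in> quadratic_field D" "u - v \<in> quadratic_field D" "u * v \<in> quadratic_field D"
proof -
  obtain x1 y1 x2 y2 where u: "u = of_rat x1 + of_rat y1 * csqrt (of_int D)"
    and v: "v = of_rat x2 + of_rat y2 * csqrt (of_int D)"
    using assms by (meson quadratic_field_memE)
  have "u + v = of_rat (x1 + x2) + of_rat (y1 + y2) * csqrt (of_int D)"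
    "u - v = of_rat (x1 - x2) + of_rat (y1 - y2) * csqrt (of_int D)"
    unfolding u v by (simp_all add: of_rat_add of_rat_diff algebra_simps)
  moreover have "u * v = of_rat (x1 * x2 + y1 * y2 * of_int D) + of_rat (x1 * y2 + x2 * y1) * csqrt (of_int D)"
    unfolding u v by (simp add: of_rat_add of_rat_mult algebra_simps flip: power2_eq_square)
  ultimately show "u + v \<in> quadratic_field D" "u - v \<in> quadratic_field D" "u * v \<in> quadratic_field D"
    by (simp_all only: quadratic_field_memI)
qed

text \<open>The inverse of \<open>x + y\<surd>D\<close> is \<open>(x - y\<surd>D)/(x\<^sup>2 - y\<^sup>2D)\<close>, whose denominator vanishes only at \<open>0\<close>.\<close>
lemma quadratic_field_inverse:
  assumes "\<nexists>m. D = m ^ 2" "u \<in> quadratic_field D"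
  shows "inverse u \<in> quadratic_field D"
proof -
  obtain x y where u: "u = of_rat x + of_rat y * csqrt (of_int D)"
    using assms(2) by (rule quadratic_field_memE)
  define N where "N = x ^ 2 - y ^ 2 * of_int D"
  have N: "N \<noteq> 0" if "u \<noteq> 0"
  proof
    assume "N = 0"
    show False
    proof (cases "y = 0")
      case True
      then show False using \<open>N = 0\<close> that u unfolding N_def by simp
    next
      case False
      then have "(x / y) ^ 2 = of_int D" using \<open>N = 0\<close> unfolding N_def by (simp add: field_simps)
      then show False using rat_square_eq_int_imp_square assms(1) by blast
    qed
  qed
  have uN: "u * (of_rat x - of_rat y * csqrt (of_int D)) = of_rat N"
    unfolding u N_def by (simp add: of_rat_diff of_rat_mult of_rat_power algebra_simps flip: power2_eq_square)
  show ?thesis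
  proof (cases "u = 0")
    case True
    then show ?thesis using quadratic_field_memI[of 0 0 D] by simp
  next
    case False
    have "inverse u = (of_rat x - of_rat y * csqrt (of_int D)) / of_rat N"
      using N[OF False] False uN by (simp add: field_simps)
    also have "\<dots> = of_rat (x / N) + of_rat (- y / N) * csqrt (of_int D)"
      by (simp add: of_rat_divide of_rat_minus diff_divide_distrib)
    finally show ?thesis by (simp only: quadratic_field_memI)
  qed
qed

lemma complex_subfield_quadratic_field:
  "\<nexists>m. D = m ^ 2 \<Longrightarrow> complex_subfield (quadratic_field D)"
  unfolding complex_subfield_def
  using quadratic_field_memI[of 0 0 D] quadratic_field_memI[of 1 0 D]
    quadratic_field_ring_closed quadratic_field_inverse by auto

lemma gen_field_csqrt_subset_quadratic_field:
  "\<nexists>m. D = m ^ 2 \<Longrightarrow> gen_field {csqrt (of_int D)} \<subseteq> quadratic_field D"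
  using complex_subfield_quadratic_field quadratic_field_memI[of 0 1 D]
  by (intro gen_field_least) auto

lemma complex_of_rat_eq_of_real: "(of_rat q :: complex) = of_real (of_rat q)"
proof -
  obtain a b where "quotient_of q = (a, b)" by (cases "quotient_of q")
  then have "q = of_int a / of_int b" by (rule quotient_of_div)
  then show ?thesis by (simp add: of_rat_divide)
qed

lemma Re_Im_quadratic_field_neg:
  assumes "D < 0"
  shows "Re (of_rat x + of_rat y * csqrt (of_int D)) = of_rat x"
    and "Im (of_rat x + of_rat y * csqrt (of_int D)) = of_rat y * sqrt (of_int (- D))"
  using assms by (simp_all add: complex_of_rat_eq_of_real)

lemma Im_quadratic_field_nonneg:
  assumes "D \<ge> 0"
  shows "Im (of_rat x + of_rat y * csqrt (of_int D)) = 0"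
  using assms by (simp add: complex_of_rat_eq_of_real)

lemma power_12_eq_1_if_small_trace:
  fixes \<omega> :: complex
  assumes "\<omega> ^ 2 - of_int r * \<omega> + 1 = 0" "\<bar>r\<bar> \<le> 2"
  shows "\<omega> ^ 12 = 1"
proof -
  consider "r = -2" | "r = -1" | "r = 0" | "r = 1" | "r = 2" using assms(2) by linarith
  then show ?thesis
  proof cases
    case 1
    then have "(\<omega> + 1) ^ 2 = 0" using assms(1) by (simp add: power2_eq_square algebra_simps)
    then have "\<omega> = -1" by (simp add: add_eq_0_iff2)
    then show ?thesis by simp
  next
    case 2
    have "\<omega> ^ 12 - 1 = (\<omega> ^ 2 + \<omega> + 1) * ((\<omega> - 1) * (\<omega> ^ 9 + \<omega> ^ 6 + \<omega> ^ 3 + 1))" by algebra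
    then show ?thesis using assms(1) 2 by simp
  next
    case 3
    have "\<omega> ^ 12 - 1 = (\<omega> ^ 2 + 1) * (\<omega> ^ 10 - \<omega> ^ 8 + \<omega> ^ 6 - \<omega> ^ 4 + \<omega> ^ 2 - 1)" by algebra
    then show ?thesis using assms(1) 3 by simp
  next
    case 4
    have "\<omega> ^ 12 - 1 = (\<omega> ^ 2 - \<omega> + 1) * ((\<omega> + 1) * (\<omega> ^ 3 - 1) * (\<omega> ^ 6 + 1))" by algebra
    then show ?thesis using assms(1) 4 by simp
  next
    case 5
    then have "(\<omega> - 1) ^ 2 = 0" using assms(1) by (simp add: power2_eq_square algebra_simps)
    then show ?thesis by simp
  qed
qed

lemma primitive_root_of_unity_integer_trace:
  fixes \<omega> :: complex
  assumes order: "\<And>k. \<omega> ^ k = 1 \<longleftrightarrow> p dvd k" and p: "odd p" "p > 1"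
    and \<omega>: "norm \<omega> = 1" "\<omega> + cnj \<omega> = of_int r"
  shows "p = 3 \<and> r = -1"
proof -
  have "real_of_int r = 2 * Re \<omega>" using arg_cong[OF \<omega>(2), of Re] by simp
  moreover have "\<bar>Re \<omega>\<bar> \<le> 1" using abs_Re_le_cmod[of \<omega>] \<omega>(1) by simp
  ultimately have "\<bar>r\<bar> \<le> 2" by linarith
  have "\<omega> * cnj \<omega> = 1" using \<omega>(1) by (simp add: complex_mult_cnj flip: cmod_power2)
  moreover have "\<omega> ^ 2 - (\<omega> + cnj \<omega>) * \<omega> + \<omega> * cnj \<omega> = 0"
    by (simp add: algebra_simps power2_eq_square)
  ultimately have quad: "\<omega> ^ 2 - of_int r * \<omega> + 1 = 0" using \<omega>(2) by simp
  have "p dvd 12" using power_12_eq_1_if_small_trace[OF quad \<open>\<bar>r\<bar> \<le> 2\<close>] order by blast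
  moreover have "p \<le> 12" using dvd_imp_le[OF \<open>p dvd 12\<close>] by simp
  then have "p = 3 \<or> p = 5 \<or> p = 7 \<or> p = 9 \<or> p = 11" using p by presburger
  ultimately have "p = 3" by auto
  then have "\<omega> ^ 3 = 1" "\<omega> \<noteq> 1" using order[of 3] order[of 1] by simp_all
  then have "\<omega> ^ 2 + \<omega> + 1 = 0"
    using mult_eq_0_iff[of "\<omega> - 1" "\<omega> ^ 2 + \<omega> + 1"]
    by (simp add: algebra_simps power2_eq_square power3_eq_cube)
  then have "of_int (r + 1) * \<omega> = 0" using quad by simp algebra
  then have "of_int (r + 1) = (0 :: complex)" using \<omega>(1) by (metis mult_eq_0_iff norm_zero zero_neq_one)
  then have "r = -1" by (simp only: of_int_eq_0_iff)
  with \<open>p = 3\<close> show ?thesis ..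
qed

text \<open>
  The trace \<open>2 Re \<zeta>\<^sub>p\<close> is rational, hence an integer, which forces \<open>p = 3\<close> and \<open>Re \<zeta>\<^sub>3 = -1/2\<close>;
  then \<open>Im \<zeta>\<^sub>3 = \<surd>3/2 = y\<surd>-D\<close> gives \<open>D = -3v\<^sup>2\<close>.
\<close>
lemma zeta_in_quadratic_field:
  assumes "odd p" "p > 1" "zeta p \<in> quadratic_field D"
  shows "p = 3 \<and> (\<exists>v. v \<noteq> 0 \<and> D = - 3 * v ^ 2)"
proof -
  define \<omega> where "\<omega> = zeta p"
  obtain x y where xy: "\<omega> = of_rat x + of_rat y * csqrt (of_int D)"
    using assms(3) unfolding \<omega>_def by (rule quadratic_field_memE)
  have "p \<ge> 3" using assms(1,2) by presburger
  then have "Im \<omega> > 0"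
    unfolding \<omega>_def Re_Im_zeta by (intro sin_gt_zero) (simp_all add: field_simps)
  then have "D < 0" using Im_quadratic_field_nonneg xy by (metis not_le less_irrefl)
  have "Re \<omega> = of_rat x" using Re_Im_quadratic_field_neg(1)[OF \<open>D < 0\<close>] xy by simp
  then have "\<omega> + cnj \<omega> = of_rat (2 * x)"
    unfolding complex_add_cnj by (simp add: complex_of_rat_eq_of_real of_rat_mult)
  moreover from this have "2 * x \<in> \<int>"
    using root_of_unity_trace_rat_imp_int[of \<omega> p] zeta_power_self \<open>p \<ge> 3\<close> unfolding \<omega>_def by simp
  ultimately obtain r where r: "\<omega> + cnj \<omega> = of_int r" "2 * x = of_int r"
    by (metis Ints_cases of_rat_of_int_eq)
  have "p = 3" "r = -1"
    using primitive_root_of_unity_integer_trace[OF _ assms(1,2) norm_zeta r(1)[unfolded \<omega>_def]]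
      zeta_power_eq_1_iff[of p] assms(2) by simp_all
  then have "x = - 1 / 2" using r(2) by simp
  then have "Re \<omega> = - 1 / 2" using \<open>Re \<omega> = of_rat x\<close> by (simp add: of_rat_divide of_rat_minus)
  moreover have "(Re \<omega>) ^ 2 + (Im \<omega>) ^ 2 = 1"
    using norm_zeta[of p] unfolding \<omega>_def cmod_power2[symmetric] by simp
  ultimately have "(Im \<omega>) ^ 2 = 3 / 4" by (simp add: power2_eq_square)
  moreover have "Im \<omega> = of_rat y * sqrt (of_int (- D))"
    using Re_Im_quadratic_field_neg(2)[OF \<open>D < 0\<close>] xy by simp
  ultimately have "of_rat ((2 * y) ^ 2 * of_int (- D)) = (of_rat 3 :: real)"
    using \<open>D < 0\<close>
    by (simp add: of_rat_mult of_rat_power of_rat_minus power_mult_distrib algebra_simps)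
  then obtain v where "v \<noteq> 0" "- D = 3 * v ^ 2"
    using rat_square_mult_int_eq_3 unfolding of_rat_eq_iff by blast
  then show ?thesis using \<open>p = 3\<close> by (intro conjI exI[of _ v]) simp_all
qed

section \<open>Squarefree parts\<close>

lemma squarefree_mult_square_unique:
  fixes s s' m m' :: int
  assumes "squarefree s" "squarefree s'" "s * m ^ 2 = s' * m' ^ 2" "m \<noteq> 0"
  shows "s = s'"
proof -
  define g where "g = gcd m m'"
  obtain a b where ab: "m = a * g" "m' = b * g" "coprime a b"
    using gcd_coprime_exists[of m m'] assms(4) unfolding g_def by auto
  have "g \<noteq> 0" using assms(4) unfolding g_def by simp
  then have eq: "s * a ^ 2 = s' * b ^ 2"
    using assms(3) unfolding ab by (simp add: power_mult_distrib flip: mult.assoc)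
  have "coprime (a ^ 2) (b ^ 2)" using ab(3) by simp
  then have "a ^ 2 dvd s'" "b ^ 2 dvd s"
    using eq by (metis coprime_commute coprime_dvd_mult_left_iff dvd_triv_right)+
  then have "is_unit a" "is_unit b" using assms(1,2) by (metis squarefreeD)+
  then have "a ^ 2 = 1" "b ^ 2 = 1" by (metis zdvd1_eq power2_abs power_one)+
  then show ?thesis using eq by simp
qed

lemma squarefree_part_mult_square:
  assumes "squarefree s" "m \<noteq> 0"
  shows "squarefree_part (s * m ^ 2) = s"
  unfolding squarefree_part_def
proof (rule the_equality)
  show "squarefree s \<and> (\<exists>m'. s * m ^ 2 = s * m' ^ 2)" using assms(1) by blast
  show "s' = s" if "squarefree s' \<and> (\<exists>m'. s * m ^ 2 = s' * m' ^ 2)" for s'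
    using that squarefree_mult_square_unique[OF assms(1) _ _ assms(2)] by metis
qed

lemma zeta_in_quadratic_gen_field:
  assumes "\<nexists>m. D = m ^ 2" "odd p" "p > 1" "zeta p \<in> gen_field {csqrt (of_int D)}"
  shows "p = 3 \<and> squarefree_part D = - 3"
proof -
  obtain v where "p = 3" "v \<noteq> 0" "D = - 3 * v ^ 2"
    using zeta_in_quadratic_field[OF assms(2,3)] gen_field_csqrt_subset_quadratic_field[OF assms(1)]
      assms(4) by blast
  then show ?thesis using squarefree_part_mult_square[of "- 3"] by (simp add: squarefree_prime)
qed

theorem lemma5p4:
  fixes a1 a2 :: int and n d :: nat and a :: complex
  assumes "a1 \<noteq> 0" and "a2 \<noteq> 0"
    and "\<not> (\<exists>m::int. a1^2 + 4 * a2 = m^2)"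
    and "odd n" and "n > 0"
    and "squarefree_part (a1^2 + 4 * a2) = -3 \<Longrightarrow> \<not> (3 dvd n)"
    and "d > 0" and "d dvd n"
    and "a \<in> gen_field {csqrt (of_int (a1^2 + 4 * a2))}"
  shows "a \<in> dth_powers (gen_field {csqrt (of_int (a1^2 + 4 * a2)), exp (2 * pi * \<i> / of_nat n)}) d
     \<longleftrightarrow> a \<in> dth_powers (gen_field {csqrt (of_int (a1^2 + 4 * a2))}) d"
proof -
  define K where "K = gen_field {csqrt (of_int (a1^2 + 4 * a2))}"
  interpret cyclotomic_extension K n
    using complex_subfield_gen_field assms(5) unfolding K_def by unfold_locales
  have "zeta p \<notin> K" if "prime p" "p dvd n" for p
    using zeta_in_quadratic_gen_field[OF assms(3)] assms(4,6) that prime_gt_1_nat[OF that(1)]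
    unfolding K_def by (metis dvd_trans)
  then have "a \<in> dth_powers ext_field d \<longleftrightarrow> a \<in> dth_powers K d"
    using kummer_descent assms(8,9) unfolding K_def by blast
  moreover have "gen_field {csqrt (of_int (a1^2 + 4 * a2)), zeta n} = ext_field"
    using gen_field_insert_eq_ext_field[OF K_def] by (simp add: insert_commute)
  ultimately show ?thesis unfolding K_def zeta_def by simp
qed

end
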